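(* There exist a graph $H$ and a positive semidefinite $0$-regular kernel $W$ such that $t(H,W)<0$.
   Context: Let $(\Omega,\mu)$ be an atomless standard probability space. A kernel is a bounded symmetric measurable $W:\Omega\times\Omega\to\mathbb R$. For a graph $H$, $t(H,W)=\int_{\Omega^{V(H)}}\prod_{uv\in E(H)}W(x_u,x_v)\prod_{v\in V(H)}d\mu(x_v)$. A kernel is $0$-regular if $\int_\Omega W(x,y)\,dy=0$ for a.e. $x$, and positive semidefinite if $\iint f(x)W(x,y)f(y)\,dx\,dy\ge0$ for every bounded measurable $f:\Omega\to\mathbb R$. *)

theory Defs
  imports "HOL-Probability.Probability"
begin

definition Omega :: "real measure" where
  "Omega = restrict_space lborel {0..1}"

definition is_kernel :: "'a measure \<Rightarrow> ('a \<Rightarrow> 'a \<Rightarrow> real) \<Rightarrow> bool" where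
  "is_kernel M W \<longleftrightarrow>
     (\<lambda>(x,y). W x y) \<in> borel_measurable (M \<Otimes>\<^sub>M M) \<and>
     (\<exists>C. \<forall>x\<in>space M. \<forall>y\<in>space M. \<bar>W x y\<bar> \<le> C) \<and>
     (\<forall>x\<in>space M. \<forall>y\<in>space M. W x y = W y x)"

definition zero_regular :: "'a measure \<Rightarrow> ('a \<Rightarrow> 'a \<Rightarrow> real) \<Rightarrow> bool" where
  "zero_regular M W \<longleftrightarrow> (AE x in M. (\<integral>y. W x y \<partial>M) = 0)"

definition psd_kernel :: "'a measure \<Rightarrow> ('a \<Rightarrow> 'a \<Rightarrow> real) \<Rightarrow> bool" where
  "psd_kernel M W \<longleftrightarrow>
     (\<forall>f. f \<in> borel_measurable M \<longrightarrow> (\<exists>C. \<forall>x\<in>space M. \<bar>f x\<bar> \<le> C) \<longrightarrow>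
        (\<integral>x. (\<integral>y. f x * W x y * f y \<partial>M) \<partial>M) \<ge> 0)"

definition simple_graph :: "nat \<Rightarrow> (nat \<times> nat) set \<Rightarrow> bool" where
  "simple_graph n E \<longleftrightarrow> E \<subseteq> {(u,v). u < v \<and> v < n}"

definition hom_density :: "nat \<Rightarrow> (nat \<times> nat) set \<Rightarrow> 'a measure \<Rightarrow> ('a \<Rightarrow> 'a \<Rightarrow> real) \<Rightarrow> real" where
  "hom_density n E M W =
     (\<integral>x. (\<Prod>(u,v)\<in>E. W (x u) (x v)) \<partial>(PiM {..<n} (\<lambda>_. M)))"

end

theory Submission
  imports Defs
begin

text \<open>A rank-one kernel \<open>W(x,y) = g(x) g(y)\<close> is positive semidefinite, it is 0-regular as soon
as \<open>\<integral>g = 0\<close>, and its homomorphism densities factor over the vertices: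
\<open>t(H,W) = \<Prod>\<^sub>v \<integral>g^(deg v)\<close>. So it suffices to take a mean-zero step function \<open>g\<close> whose third
and fifth moments have opposite signs (\<open>g = 4, -3, 1\<close> on intervals of lengths \<open>1/9, 1/3, 5/9\<close>
gives \<open>-4/3\<close> and \<open>100/3\<close>), together with a graph whose only odd degrees are one 3 and one 5.\<close>

definition vertex_degree :: "(nat \<times> nat) set \<Rightarrow> nat \<Rightarrow> nat" where
  "vertex_degree E v = card {e \<in> E. fst e = v \<or> snd e = v}"

lemma finite_simple_graph_edges: "simple_graph n E \<Longrightarrow> finite E"
  unfolding simple_graph_def
  by (rule finite_subset[of _ "{..<n} \<times> {..<n}"]) auto

lemma prod_edges_rank_one:
  fixes h :: "nat \<Rightarrow> 'a::comm_monoid_mult"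
  assumes G: "simple_graph n E"
  shows "(\<Prod>(u,v)\<in>E. h u * h v) = (\<Prod>v<n. h v ^ vertex_degree E v)"
proof -
  have fin: "finite E"
    using G by (rule finite_simple_graph_edges)
  have endpoint: "(\<Prod>e\<in>E. h (p e)) = (\<Prod>v<n. h v ^ card {e \<in> E. p e = v})"
    if "p ` E \<subseteq> {..<n}" for p
  proof -
    have "(\<Prod>e\<in>E. h (p e)) = (\<Prod>v<n. \<Prod>e\<in>{e \<in> E. p e = v}. h (p e))"
      using prod.group[OF fin _ that, of "\<lambda>e. h (p e)"] by simp
    also have "\<dots> = (\<Prod>v<n. h v ^ card {e \<in> E. p e = v})"
      by (intro prod.cong refl) simp
    finally show ?thesis .
  qed
  have "fst ` E \<subseteq> {..<n}" "snd ` E \<subseteq> {..<n}"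
    using G unfolding simple_graph_def by auto
  note fst_deg = endpoint[OF this(1)] and snd_deg = endpoint[OF this(2)]
  have deg_split: "vertex_degree E v = card {e \<in> E. fst e = v} + card {e \<in> E. snd e = v}" for v
  proof -
    have "{e \<in> E. fst e = v \<or> snd e = v} = {e \<in> E. fst e = v} \<union> {e \<in> E. snd e = v}"
      by auto
    moreover have "{e \<in> E. fst e = v} \<inter> {e \<in> E. snd e = v} = {}"
      using G unfolding simple_graph_def by auto
    ultimately show ?thesis
      unfolding vertex_degree_def using fin by (simp add: card_Un_disjoint)
  qed
  have "(\<Prod>(u,v)\<in>E. h u * h v) = (\<Prod>e\<in>E. h (fst e)) * (\<Prod>e\<in>E. h (snd e))"
    by (simp add: case_prod_beta prod.distrib)
  also have "\<dots> = (\<Prod>v<n. h v ^ vertex_degree E v)"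
    by (simp add: fst_deg snd_deg deg_split power_add prod.distrib)
  finally show ?thesis .
qed

lemma (in prob_space) integrable_power_bounded:
  fixes g :: "'a \<Rightarrow> real"
  assumes "g \<in> borel_measurable M" and "\<And>x. x \<in> space M \<Longrightarrow> \<bar>g x\<bar> \<le> C"
  shows "integrable M (\<lambda>x. g x ^ k)"
proof (rule integrable_const_bound[where B = "C ^ k"])
  show "AE x in M. norm (g x ^ k) \<le> C ^ k"
    using assms(2) by (intro AE_I2) (metis power_abs power_mono abs_ge_zero real_norm_def)
qed (use assms(1) in simp)

lemma hom_density_rank_one:
  assumes "prob_space M" and G: "simple_graph n E"
    and "g \<in> borel_measurable M" and "\<And>x. x \<in> space M \<Longrightarrow> \<bar>g x\<bar> \<le> C"
  shows "hom_density n E M (\<lambda>x y. g x * g y) = (\<Prod>v<n. \<integral>t. g t ^ vertex_degree E v \<partial>M)"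
proof -
  interpret prob_space M by fact
  interpret product_sigma_finite "\<lambda>_. M" by unfold_locales
  have "hom_density n E M (\<lambda>x y. g x * g y)
      = (\<integral>x. (\<Prod>v<n. g (x v) ^ vertex_degree E v) \<partial>PiM {..<n} (\<lambda>_. M))"
    unfolding hom_density_def prod_edges_rank_one[OF G] ..
  also have "\<dots> = (\<Prod>v<n. \<integral>t. g t ^ vertex_degree E v \<partial>M)"
    using assms by (intro product_integral_prod integrable_power_bounded) auto
  finally show ?thesis .
qed

lemma is_kernel_rank_one:
  assumes "g \<in> borel_measurable M" and "\<And>x. x \<in> space M \<Longrightarrow> \<bar>g x\<bar> \<le> C"
  shows "is_kernel M (\<lambda>x y. g x * g y)"
  unfolding is_kernel_def
proof (intro conjI)
  show "(\<lambda>(x, y). g x * g y) \<in> borel_measurable (M \<Otimes>\<^sub>M M)"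
    using assms(1) by measurable
  have "\<bar>g x * g y\<bar> \<le> C * C" if "x \<in> space M" "y \<in> space M" for x y
    using assms(2)[OF that(1)] assms(2)[OF that(2)] by (simp add: abs_mult mult_mono')
  then show "\<exists>B. \<forall>x\<in>space M. \<forall>y\<in>space M. \<bar>g x * g y\<bar> \<le> B"
    by blast
qed simp

lemma psd_kernel_rank_one: "psd_kernel M (\<lambda>x y. g x * g y)"
  unfolding psd_kernel_def
proof (intro allI impI)
  fix f :: "'a \<Rightarrow> real"
  define c where "c = (\<integral>y. g y * f y \<partial>M)"
  \<comment> \<open>Pulling out constants needs no integrability: both sides are 0 for non-integrable integrands.\<close>
  have "(\<integral>x. (\<integral>y. f x * (g x * g y) * f y \<partial>M) \<partial>M) = (\<integral>x. f x * g x * c \<partial>M)"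
    unfolding c_def by (subst integral_mult_right_zero[symmetric]) (simp add: algebra_simps)
  also have "\<dots> = c * c"
    unfolding c_def by (simp add: integral_mult_left_zero mult.commute)
  finally show "0 \<le> (\<integral>x. (\<integral>y. f x * (g x * g y) * f y \<partial>M) \<partial>M)"
    by simp
qed

lemma zero_regular_rank_one:
  "(\<integral>y. g y \<partial>M) = 0 \<Longrightarrow> zero_regular M (\<lambda>x y. g x * g y)"
  unfolding zero_regular_def by simp

definition step_fn :: "real \<Rightarrow> real" where
  "step_fn x = (if x < 1/9 then 4 else if x < 4/9 then -3 else 1)"

lemma step_fn_measurable [measurable]: "step_fn \<in> borel_measurable Omega"
  unfolding Omega_def step_fn_def by (rule measurable_restrict_space1) measurable

lemma abs_step_fn_le: "\<bar>step_fn x\<bar> \<le> 4"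
  by (simp add: step_fn_def)

lemma prob_space_Omega: "prob_space Omega"
  unfolding Omega_def by (rule prob_space_restrict_space) auto

lemma step_fn_moment: "(\<integral>x. step_fn x ^ k \<partial>Omega) = 4^k / 9 + (-3)^k / 3 + 5/9"
proof -
  have "(\<integral>x. step_fn x ^ k \<partial>Omega) = (\<integral>x. indicator {0..1} x *\<^sub>R step_fn x ^ k \<partial>lborel)"
    unfolding Omega_def by (rule integral_restrict_space) simp
  also have "(\<lambda>x. indicator {0..1} x *\<^sub>R step_fn x ^ k) =
      (\<lambda>x. 4^k * indicator {0..<1/9} x + ((-3)^k * indicator {1/9..<4/9} x
             + indicator {4/9..1::real} x))"
    by (rule ext) (auto simp: step_fn_def indicator_def)
  also have "integral\<^sup>L lborel \<dots> = 4^k * (1/9) + ((-3)^k * (4/9 - 1/9) + (1 - 4/9))"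
    by (subst Bochner_Integration.integral_add, (auto)[2])+ simp
  finally show ?thesis
    by simp
qed

lemma Collect_insert_conj:
  "{x \<in> insert a A. P x} = (if P a then insert a {x \<in> A. P x} else {x \<in> A. P x})"
  by auto

theorem proposition5p2:
  shows "\<exists>n E W. simple_graph n E \<and> is_kernel Omega W \<and> psd_kernel Omega W \<and>
           zero_regular Omega W \<and> hom_density n E Omega W < 0"
proof -
  define E :: "(nat \<times> nat) set" where
    "E = {(0,1), (0,2), (0,3), (0,4), (0,5), (1,2), (1,3), (4,5)}"
  define W where "W = (\<lambda>x y. step_fn x * step_fn y)"
  have G: "simple_graph 6 E"
    unfolding simple_graph_def E_def by auto
  have "hom_density 6 E Omega W = (\<Prod>v<6. \<integral>t. step_fn t ^ vertex_degree E v \<partial>Omega)"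
    unfolding W_def using prob_space_Omega G step_fn_measurable abs_step_fn_le
    by (rule hom_density_rank_one)
  also have "\<dots> = (\<integral>t. step_fn t ^ 5 \<partial>Omega) * (\<integral>t. step_fn t ^ 3 \<partial>Omega)
                   * (\<integral>t. step_fn t ^ 2 \<partial>Omega) ^ 4"
    unfolding E_def vertex_degree_def Collect_insert_conj
    by (simp add: lessThan_nat_numeral eval_nat_numeral mult.assoc)
  also have "\<dots> < 0"
    by (simp add: step_fn_moment)
  finally have "hom_density 6 E Omega W < 0" .
  moreover have "is_kernel Omega W" "psd_kernel Omega W" "zero_regular Omega W"
    unfolding W_def using step_fn_moment[of 1]
    by (auto intro: is_kernel_rank_one step_fn_measurable abs_step_fn_le psd_kernel_rank_one
        zero_regular_rank_one)
  ultimately show ?thesis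
    using G by blast
qed

end
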